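(* Let $n\ge 0$ and put $\mathbb{C}[\epsilon]=\mathbb{C}[z]/(z^{n+1})$. Let $K=\mathbb{C}(s,x,t_0,u_{i,j}:0\le j\le i)$ with the derivation $\partial$ described in the context, and write $u_i=u_{i,i}$. Then in $K[\epsilon]=K\otimes\mathbb{C}[\epsilon]$: (a) $t_0-x+\epsilon=\Big(\sum_{k=0}^{n}\frac{1}{k!}\partial^k\big(\frac{t_0-x}{s-u_0}\big)\epsilon^k\Big)\Big(s-\sum_{k=0}^{n}u_k\epsilon^k\Big)$; (b) for every $0\le m\le n$, $\frac{1}{m!}\partial^m\big(\log(s-u_0)\big)=[\epsilon^m]\log\big(s-\sum_{k=0}^n u_k\epsilon^k\big)$.
   Context: $K$ is the field of rational functions over $\mathbb{C}$ in the independent variables $s,x,t_0$ and $u_{i,j}$ for integers $0\le j\le i$. The derivation $\partial:K\to K$ is the unique $\mathbb{C}$-linear derivation with $\partial s=\partial x=0$, $\partial t_0=1$ and $\partial u_{i,j}=(j+1)u_{i+1,j+1}$; one writes $u_i:=u_{i,i}$ (so $\partial u_i=(i+1)u_{i+1}$). In (b), for $m\ge1$, $\partial^m\log(s-u_0)$ means $\partial^{m-1}\big(\frac{-u_1}{s-u_0}\big)$ (the formal derivative of $\log(s-u_0)$ is $-\partial u_0/(s-u_0)$), and for $m\ge 1$, $[\epsilon^m]\log(s-\sum_k u_k\epsilon^k)$ denotes the coefficient of $\epsilon^m$ in the (finite, since $\epsilon$ is nilpotent) expansion of $\log\big(1-\sum_{k=1}^n\frac{u_k}{s-u_0}\epsilon^k\big)=-\sum_{r\ge1}\frac1r\big(\sum_{k=1}^n\frac{u_k}{s-u_0}\epsilon^k\big)^r$;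 for $m=0$ both sides are $\log(s-u_0)$. *)

theory Defs
  imports "HOL-Computational_Algebra.Polynomial"
begin

definition is_derivation :: "('a::field \<Rightarrow> 'a) \<Rightarrow> bool" where
  "is_derivation D \<longleftrightarrow> (\<forall>a b. D (a + b) = D a + D b) \<and> (\<forall>a b. D (a * b) = D a * b + a * D b)"

text \<open>Elements of K[eps] = K[z]/(z^(n+1)) are represented by polynomials in z;
  equality in K[eps] is congruence modulo z^(n+1).\<close>
definition eq_trunc :: "nat \<Rightarrow> 'a::field poly \<Rightarrow> 'a poly \<Rightarrow> bool" where
  "eq_trunc n P Q \<longleftrightarrow> [:0, 1:] ^ Suc n dvd (P - Q)"

text \<open>For m >= 1, the coefficient of eps^m in
  log(1 - sum_{k=1..n} u_k/(s-u_0) eps^k) = - sum_{r>=1} (1/r) (sum_{k=1..n} u_k/(s-u_0) eps^k)^r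
  (the sum over r is finite since eps^(n+1) = 0; terms with r > n vanish).\<close>
definition log_coeff :: "nat \<Rightarrow> 'a::field_char_0 \<Rightarrow> (nat \<Rightarrow> 'a) \<Rightarrow> nat \<Rightarrow> 'a" where
  "log_coeff n s u m =
     (let w = (\<Sum>k=1..n. monom (u k / (s - u 0)) k)
      in - (\<Sum>r=1..n. coeff (w ^ r) m / of_nat r))"

end

theory Submission
  imports Defs "HOL-Computational_Algebra.Polynomial_FPS"
begin

(* For a derivation D in characteristic 0, Leibniz's rule makes the Taylor map
   T a = sum_k (D^k a / k!) eps^k a ring homomorphism into power series in eps:
   both T (a * b) and T a * T b have eps-derivative T (D a * b + a * D b).
   T sends s - u_0 to s - sum_k u_k eps^k and t_0 - x to t_0 - x + eps, so (a) is
   T f * T (s - u_0) = T (t_0 - x) for f = (t_0 - x) / (s - u_0), truncated at eps^(n+1).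
   For (b), log (T a / a) and the termwise integral of T (D a / a) both vanish at
   eps = 0 and have eps-derivative T (D a) / T a, so they coincide. *)

unbundle fps_syntax

lemma eq_trunc_iff_fps_cutoff:
  "eq_trunc n P Q \<longleftrightarrow> fps_cutoff (Suc n) (fps_of_poly P) = fps_cutoff (Suc n) (fps_of_poly Q)"
proof -
  have "[:0, 1:] ^ Suc n = (monom 1 (Suc n) :: 'a poly)"
    by (simp add: monom_altdef)
  then show ?thesis
    by (simp add: eq_trunc_def fps_cutoff_eq_fps_cutoff_iff monom_1_dvd_iff')
qed

lemma fps_cutoff_idem [simp]: "fps_cutoff n (fps_cutoff n f) = fps_cutoff n f"
  by (simp add: fps_eq_iff)

lemma fps_cutoff_mult:
  fixes f g :: "'a::comm_ring_1 fps"
  shows "fps_cutoff n (f * g) = fps_cutoff n (fps_cutoff n f * fps_cutoff n g)"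
  by (simp add: fps_cutoff_eq_fps_cutoff_iff fps_cutoff_left_mult_nth fps_cutoff_right_mult_nth)

lemma fps_cutoff_power:
  fixes f :: "'a::comm_ring_1 fps"
  shows "fps_cutoff n (f ^ r) = fps_cutoff n (fps_cutoff n f ^ r)"
proof (induction r)
  case (Suc r)
  have "fps_cutoff n (f ^ Suc r) = fps_cutoff n (fps_cutoff n f * fps_cutoff n (f ^ r))"
    unfolding power_Suc by (rule fps_cutoff_mult)
  also have "\<dots> = fps_cutoff n (fps_cutoff n f * fps_cutoff n (fps_cutoff n f ^ r))"
    by (simp only: Suc.IH)
  also have "\<dots> = fps_cutoff n (fps_cutoff n f ^ Suc r)"
    using fps_cutoff_mult[of n "fps_cutoff n f" "fps_cutoff n f ^ r"]
    by (simp only: power_Suc fps_cutoff_idem)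
  finally show ?case .
qed simp

lemma fps_of_poly_sum_monom:
  "fps_of_poly (\<Sum>k=0..n. monom (c k) k) = fps_cutoff (Suc n) (Abs_fps c)"
  by (simp add: fps_eq_iff coeff_sum)

lemma fps_deriv_fps_ln_compose:
  fixes b :: "'a::field_char_0 fps"
  assumes "b $ 0 = 0"
  shows "(1 + b) * fps_deriv (fps_ln 1 oo b) = fps_deriv b"
proof -
  have "(1 + b) * (inverse (1 + fps_X) oo b) = ((1 + fps_X) * inverse (1 + fps_X)) oo b"
    using assms by (simp add: fps_compose_add_distrib fps_compose_mult_distrib)
  also have "\<dots> = 1"
    by (simp add: inverse_mult_eq_1')
  finally have inverse: "(1 + b) * (inverse (1 + fps_X) oo b) = 1" .
  have "fps_deriv (fps_ln 1 oo b) = (inverse (1 + fps_X) oo b) * fps_deriv b"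
    using assms by (simp add: fps_compose_deriv fps_ln_deriv)
  then have "(1 + b) * fps_deriv (fps_ln 1 oo b) = (1 + b) * (inverse (1 + fps_X) oo b) * fps_deriv b"
    by (simp only: mult.assoc)
  also have "\<dots> = fps_deriv b"
    by (simp only: inverse mult_1_left)
  finally show ?thesis .
qed

lemma fps_ln_compose_nth:
  fixes V :: "'a::field_char_0 fps"
  assumes V0: "V $ 0 = 0" and "m \<le> n"
  shows "(fps_ln 1 oo V) $ m = - (\<Sum>r=1..n. ((- V) ^ r) $ m / of_nat r)"
proof -
  have sign: "fps_ln 1 $ r * (V ^ r $ m) = - (((- V) ^ r) $ m / of_nat r)" if "r \<ge> 1" for r
  proof (cases "even r")
    case True
    then have "odd (r - 1)"
      using that by simp
    with True show ?thesis
      by (simp add: fps_ln_nth)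
  next
    case False
    then have "even (r - 1)"
      using that by simp
    with False show ?thesis
      by (simp add: fps_ln_nth)
  qed
  have "(fps_ln 1 oo V) $ m = (\<Sum>r=1..m. fps_ln 1 $ r * (V ^ r $ m))"
    by (simp add: fps_compose_nth sum.atLeast_Suc_atMost atLeastSucAtMost_greaterThanAtMost)
  also have "\<dots> = - (\<Sum>r=1..m. ((- V) ^ r) $ m / of_nat r)"
    by (simp add: sign sum_negf)
  also have "(\<Sum>r=1..m. ((- V) ^ r) $ m / of_nat r) = (\<Sum>r=1..n. ((- V) ^ r) $ m / of_nat r)"
    using assms startsby_zero_power_prefix[of "- V"]
    by (intro sum.mono_neutral_left) auto
  finally show ?thesis .
qed

lemma log_coeff_eq_fps_ln_nth:
  fixes u :: "nat \<Rightarrow> 'a::field_char_0"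
  assumes "m \<le> n"
  shows "log_coeff n s u m = (fps_ln 1 oo - Abs_fps (\<lambda>k. if k = 0 then 0 else u k / (s - u 0))) $ m"
proof -
  define W where "W = Abs_fps (\<lambda>k. if k = 0 then 0 else u k / (s - u 0))"
  define w where "w = (\<Sum>k=1..n. monom (u k / (s - u 0)) k)"
  have "fps_cutoff (Suc n) (fps_of_poly w) = fps_cutoff (Suc n) W"
    by (simp add: fps_eq_iff w_def W_def coeff_sum)
  then have "fps_cutoff (Suc n) (fps_of_poly (w ^ r)) = fps_cutoff (Suc n) (W ^ r)" for r
    by (metis fps_of_poly_power fps_cutoff_power)
  then have "coeff (w ^ r) m = (W ^ r) $ m" for r
    using assms by (simp add: fps_cutoff_eq_fps_cutoff_iff)
  then have "log_coeff n s u m = - (\<Sum>r=1..n. (W ^ r) $ m / of_nat r)"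
    unfolding log_coeff_def Let_def w_def[symmetric] by simp
  also have "\<dots> = (fps_ln 1 oo - W) $ m"
    using assms by (simp add: fps_ln_compose_nth W_def)
  finally show ?thesis
    by (simp add: W_def)
qed

definition taylor_fps :: "('a::field_char_0 \<Rightarrow> 'a) \<Rightarrow> 'a \<Rightarrow> 'a fps" where
  "taylor_fps D a = Abs_fps (\<lambda>k. (D ^^ k) a / fact k)"

lemma taylor_fps_nth [simp]: "taylor_fps D a $ k = (D ^^ k) a / fact k"
  by (simp add: taylor_fps_def)

locale derivation =
  fixes D :: "'a::field_char_0 \<Rightarrow> 'a"
  assumes is_derivation: "is_derivation D"
begin

sublocale additive D
  using is_derivation by unfold_locales (simp add: is_derivation_def)

lemma mult: "D (a * b) = D a * b + a * D b"
  using is_derivation by (simp add: is_derivation_def)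

lemma one: "D 1 = 0"
  using mult[of 1 1] by simp

lemma of_nat: "D (of_nat k) = 0"
  by (induction k) (simp_all add: zero add one)

lemma funpow_additive: "additive (D ^^ k)"
  by (induction k) (simp_all add: additive_def add)

lemma taylor_fps_add: "taylor_fps D (a + b) = taylor_fps D a + taylor_fps D b"
  by (simp add: fps_eq_iff additive.add[OF funpow_additive] add_divide_distrib)

lemma taylor_fps_diff: "taylor_fps D (a - b) = taylor_fps D a - taylor_fps D b"
  by (simp add: fps_eq_iff additive.diff[OF funpow_additive] diff_divide_distrib)

lemma fps_deriv_taylor_fps: "fps_deriv (taylor_fps D a) = taylor_fps D (D a)"
proof -
  have "of_nat (Suc k) * ((D ^^ Suc k) a / fact (Suc k)) = (D ^^ k) (D a) / (fact k :: 'a)" for k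
    by (simp add: funpow_Suc_right field_simps del: funpow.simps of_nat_Suc)
  then show ?thesis
    by (simp add: fps_eq_iff del: of_nat_Suc)
qed

lemma taylor_fps_mult: "taylor_fps D (a * b) = taylor_fps D a * taylor_fps D b"
proof -
  have "\<forall>a b. taylor_fps D (a * b) $ k = (taylor_fps D a * taylor_fps D b) $ k" for k
  proof (induction k)
    case (Suc k)
    show ?case
    proof (intro allI)
      fix a b
      have "of_nat (Suc k) * taylor_fps D (a * b) $ Suc k = fps_deriv (taylor_fps D (a * b)) $ k"
        by simp
      also have "\<dots> = (taylor_fps D (D a) * taylor_fps D b + taylor_fps D a * taylor_fps D (D b)) $ k"
        using Suc.IH by (simp add: fps_deriv_taylor_fps mult taylor_fps_add)
      also have "\<dots> = fps_deriv (taylor_fps D a * taylor_fps D b) $ k"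
        by (simp add: fps_deriv_taylor_fps algebra_simps)
      also have "\<dots> = of_nat (Suc k) * (taylor_fps D a * taylor_fps D b) $ Suc k"
        by (simp only: fps_deriv_nth Suc_eq_plus1)
      finally show "taylor_fps D (a * b) $ Suc k = (taylor_fps D a * taylor_fps D b) $ Suc k"
        by (metis mult_cancel_left of_nat_neq_0)
    qed
  qed simp
  then show ?thesis
    by (simp add: fps_eq_iff)
qed

lemma taylor_fps_eq_Abs_fps:
  assumes "\<And>k. D (v k) = of_nat (Suc k) * v (Suc k)"
  shows "taylor_fps D (v 0) = Abs_fps v"
proof -
  have "(D ^^ k) (v 0) = fact k * v k" for k
  proof (induction k)
    case (Suc k)
    have "(D ^^ Suc k) (v 0) = D (fact k * v k)"
      using Suc by simp
    also have "\<dots> = fact (Suc k) * v (Suc k)"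
      using of_nat[of "fact k"] by (simp add: mult assms)
    finally show ?case .
  qed simp
  then show ?thesis
    by (simp add: fps_eq_iff)
qed

lemma taylor_fps_const:
  assumes "D c = 0"
  shows "taylor_fps D c = fps_const c"
proof -
  have "taylor_fps D c = Abs_fps (\<lambda>k. if k = 0 then c else 0)"
    using taylor_fps_eq_Abs_fps[of "\<lambda>k. if k = 0 then c else 0"] assms by (simp add: zero)
  then show ?thesis
    by (simp add: fps_eq_iff)
qed

lemma taylor_fps_unit_derivative:
  assumes "D t = 1"
  shows "taylor_fps D t = fps_const t + fps_X"
proof -
  have "taylor_fps D t = Abs_fps (\<lambda>k. if k = 0 then t else of_bool (k = 1))"
    using taylor_fps_eq_Abs_fps[of "\<lambda>k. if k = 0 then t else of_bool (k = 1)"] assms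
    by (simp add: zero one)
  then show ?thesis
    by (simp add: fps_eq_iff)
qed

lemma eq_trunc_mult_taylor_fps:
  assumes "fps_cutoff (Suc n) (fps_of_poly P) = fps_cutoff (Suc n) (taylor_fps D a)"
    and "fps_cutoff (Suc n) (fps_of_poly Q) = fps_cutoff (Suc n) (taylor_fps D b)"
    and "fps_cutoff (Suc n) (fps_of_poly R) = fps_cutoff (Suc n) (taylor_fps D (a * b))"
  shows "eq_trunc n R (P * Q)"
  unfolding eq_trunc_iff_fps_cutoff fps_of_poly_mult
  using assms fps_cutoff_mult[of "Suc n" "fps_of_poly P" "fps_of_poly Q"]
    fps_cutoff_mult[of "Suc n" "taylor_fps D a" "taylor_fps D b"]
  by (simp add: taylor_fps_mult)

lemma fps_ln_taylor_fps:
  assumes "a \<noteq> 0"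
  shows "fps_ln 1 oo (fps_const (inverse a) * taylor_fps D a - 1)
         = Abs_fps (\<lambda>m. if m = 0 then 0 else (D ^^ (m - 1)) (D a / a) / fact m)"
proof -
  define b where "b = fps_const (inverse a) * taylor_fps D a - 1"
  define L where "L = Abs_fps (\<lambda>m. if m = 0 then 0 else (D ^^ (m - 1)) (D a / a) / fact m)"
  have b0: "b $ 0 = 0"
    using assms by (simp add: b_def)
  have "of_nat (Suc m) * ((D ^^ m) (D a / a) / fact (Suc m)) = (D ^^ m) (D a / a) / (fact m :: 'a)" for m
    by (simp add: field_simps del: of_nat_Suc)
  then have "fps_deriv L = taylor_fps D (D a / a)"
    by (simp add: fps_eq_iff L_def del: of_nat_Suc)
  moreover have "taylor_fps D a * taylor_fps D (D a / a) = taylor_fps D (D a)"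
    using assms by (simp flip: taylor_fps_mult)
  ultimately have "(1 + b) * fps_deriv L = fps_deriv b"
    by (simp add: b_def fps_deriv_taylor_fps mult.assoc)
  then have "(1 + b) * fps_deriv (fps_ln 1 oo b) = (1 + b) * fps_deriv L"
    by (simp only: fps_deriv_fps_ln_compose[OF b0])
  moreover have "1 + b \<noteq> 0"
    using b0 by (metis add.right_neutral fps_one_nth fps_add_nth fps_zero_nth zero_neq_one)
  ultimately have "fps_deriv (fps_ln 1 oo b) = fps_deriv L"
    by simp
  moreover have "L $ 0 = 0"
    by (simp add: L_def)
  ultimately have "fps_ln 1 oo b = L"
    by (simp add: fps_deriv_eq_iff)
  then show ?thesis
    unfolding b_def L_def .
qed

lemma log_coeff_eq_taylor:
  assumes taylor: "taylor_fps D (s - v 0) = fps_const s - Abs_fps v"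
    and "s - v 0 \<noteq> 0" and "1 \<le> m" "m \<le> n"
  shows "log_coeff n s v m = (D ^^ (m - 1)) (D (s - v 0) / (s - v 0)) / fact m"
proof -
  have "fps_const (inverse (s - v 0)) * taylor_fps D (s - v 0) - 1
      = - Abs_fps (\<lambda>k. if k = 0 then 0 else v k / (s - v 0))"
    unfolding taylor using \<open>s - v 0 \<noteq> 0\<close> by (simp add: fps_eq_iff field_simps)
  then show ?thesis
    using assms log_coeff_eq_fps_ln_nth[of m n s v] fps_ln_taylor_fps[of "s - v 0"] by simp
qed

end

theorem proposition2p2:
  fixes D :: "'a::field_char_0 \<Rightarrow> 'a"
    and s x t0 :: 'a
    and u :: "nat \<Rightarrow> nat \<Rightarrow> 'a"
    and n :: nat
  assumes der: "is_derivation D"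
    and Ds: "D s = 0" and Dx: "D x = 0" and Dt0: "D t0 = 1"
    and Du: "\<And>i j. j \<le> i \<Longrightarrow> D (u i j) = of_nat (j + 1) * u (i + 1) (j + 1)"
    and nz: "s - u 0 0 \<noteq> 0"
  shows "eq_trunc n [: t0 - x, 1 :]
           ((\<Sum>k=0..n. monom ((D ^^ k) ((t0 - x) / (s - u 0 0)) / fact k) k)
            * ([: s :] - (\<Sum>k=0..n. monom (u k k) k)))
         \<and> (\<forall>m. 1 \<le> m \<and> m \<le> n \<longrightarrow>
           (D ^^ (m - 1)) (- u 1 1 / (s - u 0 0)) / fact m = log_coeff n s (\<lambda>k. u k k) m)"
proof -
  interpret derivation D
    by (rule derivation.intro) (fact der)
  have taylor_u: "taylor_fps D (s - u 0 0) = fps_const s - Abs_fps (\<lambda>k. u k k)"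
    using taylor_fps_eq_Abs_fps[of "\<lambda>k. u k k"] by (simp add: Du taylor_fps_diff taylor_fps_const Ds)
  have taylor_t: "taylor_fps D (t0 - x) = fps_const (t0 - x) + fps_X"
    by (simp add: taylor_fps_diff taylor_fps_const taylor_fps_unit_derivative Dt0 Dx
        flip: fps_const_sub)
  have part_a: "eq_trunc n [: t0 - x, 1 :]
      ((\<Sum>k=0..n. monom ((D ^^ k) ((t0 - x) / (s - u 0 0)) / fact k) k)
       * ([: s :] - (\<Sum>k=0..n. monom (u k k) k)))"
    by (rule eq_trunc_mult_taylor_fps[where a = "(t0 - x) / (s - u 0 0)" and b = "s - u 0 0"])
      (use nz in \<open>simp_all add: fps_of_poly_sum_monom taylor_fps_def[symmetric] taylor_u taylor_t
          fps_of_poly_diff fps_of_poly_const fps_of_poly_pCons fps_cutoff_diff fps_cutoff_fps_const\<close>)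
  have D_denominator: "D (s - u 0 0) = - u 1 1"
    using Du[of 0 0] by (simp add: diff Ds)
  have part_b: "(D ^^ (m - 1)) (- u 1 1 / (s - u 0 0)) / fact m = log_coeff n s (\<lambda>k. u k k) m"
    if "1 \<le> m" "m \<le> n" for m
    using log_coeff_eq_taylor[where v = "\<lambda>k. u k k", OF taylor_u nz that] D_denominator
    by simp
  show ?thesis
    using part_a part_b by blast
qed

end
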